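(* Let $s$ and $K$ be probability densities with respect to Lebesgue measure on $\mathbb{R}$, and for $w>0$ set $K_w(y)=w^{-1}K(w^{-1}y)$. Let $g=\sqrt{s}$ and assume that $\omega_2(g,\eta)\le\phi(\eta)$ for all $\eta\ge0$, where $\omega_2(g,\eta)=\sup_{|z|\le\eta}\|g(\cdot+z)-g\|$ and $\phi$ is a nondecreasing concave function on $[0,\infty)$ with $\phi(0)=0$. Then for every $w>0$, \[ \left\|\sqrt{s}-\sqrt{K_w\ast s}\right\|^2\le2\left[\int_{\mathbb{R}}(1\vee x^2)K(x)\,dx\right]\phi^2(w). \]
   Context: $\|\cdot\|$ is the $\mathbb{L}_2$-norm with respect to Lebesgue measure, and $\ast$ denotes convolution. *)

theory Defs
  imports "HOL-Analysis.Analysis"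
begin

definition prob_density :: "(real \<Rightarrow> real) \<Rightarrow> bool" where
  "prob_density f \<longleftrightarrow> f \<in> borel_measurable lborel \<and> (\<forall>x. 0 \<le> f x)
      \<and> (\<integral>\<^sup>+ x. ennreal (f x) \<partial>lborel) = 1"

definition scaled_kernel :: "(real \<Rightarrow> real) \<Rightarrow> real \<Rightarrow> real \<Rightarrow> real" where
  "scaled_kernel K w y = K (y / w) / w"

definition convolution :: "(real \<Rightarrow> real) \<Rightarrow> (real \<Rightarrow> real) \<Rightarrow> real \<Rightarrow> real" where
  "convolution f g x = (\<integral> y. f (x - y) * g y \<partial>lborel)"

definition L2_norm :: "(real \<Rightarrow> real) \<Rightarrow> real" where
  "L2_norm f = sqrt (\<integral> x. (f x)\<^sup>2 \<partial>lborel)"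

definition omega2 :: "(real \<Rightarrow> real) \<Rightarrow> real \<Rightarrow> real" where
  "omega2 g \<eta> = (SUP z \<in> {z. \<bar>z\<bar> \<le> \<eta>}. L2_norm (\<lambda>x. g (x + z) - g x))"

end

theory Submission
  imports Defs
begin

text \<open>
  Since \<open>t \<mapsto> (a - \<surd>t)\<^sup>2\<close> is convex for \<open>a \<ge> 0\<close>, Jensen's inequality for the probability
  weights \<open>y \<mapsto> K\<^sub>w(x - y)\<close> gives
  \<open>(\<surd>s(x) - \<surd>(K\<^sub>w * s)(x))\<^sup>2 \<le> \<integral> K\<^sub>w(z) (\<surd>s(x) - \<surd>s(x - z))\<^sup>2 dz\<close>.
  Integrating in \<open>x\<close> and exchanging the integrals bounds the squared distance by
  \<open>\<integral> K\<^sub>w(z) \<omega>\<^sub>2(\<surd>s, |z|)\<^sup>2 dz \<le> \<integral> K\<^sub>w(z) \<phi>(|z|)\<^sup>2 dz = \<integral> K(x) \<phi>(w|x|)\<^sup>2 dx\<close>.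
  Finally \<open>\<phi>(w t) \<le> max 1 t \<cdot> \<phi>(w)\<close>, because \<phi> is nondecreasing, concave and vanishes at 0.
\<close>

lemma nn_integral_lborel_translate:
  fixes f :: "real \<Rightarrow> ennreal"
  assumes [measurable]: "f \<in> borel_measurable borel"
  shows "(\<integral>\<^sup>+ x. f (x + t) \<partial>lborel) = (\<integral>\<^sup>+ x. f x \<partial>lborel)"
  using nn_integral_real_affine[OF assms, of 1 t] by (simp add: add.commute)

lemma nn_integral_lborel_reflect_translate:
  fixes f :: "real \<Rightarrow> ennreal"
  assumes [measurable]: "f \<in> borel_measurable borel"
  shows "(\<integral>\<^sup>+ y. f (t - y) \<partial>lborel) = (\<integral>\<^sup>+ y. f y \<partial>lborel)"
  using nn_integral_real_affine[OF assms, of "-1" t] by simp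

lemma nn_integral_scaled_kernel_mult:
  fixes K :: "real \<Rightarrow> real" and h :: "real \<Rightarrow> ennreal"
  assumes [measurable]: "K \<in> borel_measurable borel" "h \<in> borel_measurable borel"
    and w: "w > 0"
  shows "(\<integral>\<^sup>+ z. ennreal (scaled_kernel K w z) * h z \<partial>lborel)
       = (\<integral>\<^sup>+ x. ennreal (K x) * h (w * x) \<partial>lborel)"
proof -
  have "(\<integral>\<^sup>+ z. ennreal (scaled_kernel K w z) * h z \<partial>lborel)
      = ennreal w * (\<integral>\<^sup>+ x. ennreal (K x / w) * h (w * x) \<partial>lborel)"
    using nn_integral_real_affine[of "\<lambda>z. ennreal (scaled_kernel K w z) * h z" w 0] w
    unfolding scaled_kernel_def by simp
  also have "\<dots> = (\<integral>\<^sup>+ x. ennreal (K x / w) * ennreal w * h (w * x) \<partial>lborel)"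
    by (simp add: nn_integral_cmult[symmetric] mult_ac)
  also have "\<dots> = (\<integral>\<^sup>+ x. ennreal (K x) * h (w * x) \<partial>lborel)"
    using w by (simp add: ennreal_mult''[symmetric])
  finally show ?thesis .
qed

lemma nn_integral_mult_le_sq_diff_sqrt:
  fixes f s :: "'a \<Rightarrow> real"
  assumes [measurable]: "f \<in> borel_measurable M" "s \<in> borel_measurable M"
    and f0: "\<And>y. 0 \<le> f y" and s0: "\<And>y. 0 \<le> s y"
    and f1: "(\<integral>\<^sup>+ y. ennreal (f y) \<partial>M) = 1"
  shows "(\<integral>\<^sup>+ y. ennreal (f y * s y) \<partial>M)
      \<le> 2 * (\<integral>\<^sup>+ y. ennreal (f y * (a - sqrt (s y))\<^sup>2) \<partial>M) + ennreal (2 * a\<^sup>2)"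
proof -
  have "(\<integral>\<^sup>+ y. ennreal (f y * s y) \<partial>M)
      \<le> (\<integral>\<^sup>+ y. 2 * ennreal (f y * (a - sqrt (s y))\<^sup>2) + ennreal (2 * a\<^sup>2) * ennreal (f y) \<partial>M)"
  proof (rule nn_integral_mono)
    fix y
    have "s y \<le> 2 * (a - sqrt (s y))\<^sup>2 + 2 * a\<^sup>2"
      using s0[of y] sum_squares_ge_zero[of "2 * a - sqrt (s y)" 0]
      by (simp add: power2_eq_square algebra_simps)
    then have "f y * s y \<le> 2 * (f y * (a - sqrt (s y))\<^sup>2) + 2 * a\<^sup>2 * f y"
      using mult_left_mono[OF _ f0[of y]] by (fastforce simp: algebra_simps)
    then have "ennreal (f y * s y) \<le> ennreal (2 * (f y * (a - sqrt (s y))\<^sup>2) + 2 * a\<^sup>2 * f y)"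
      by (rule ennreal_leI)
    then show "ennreal (f y * s y)
        \<le> 2 * ennreal (f y * (a - sqrt (s y))\<^sup>2) + ennreal (2 * a\<^sup>2) * ennreal (f y)"
      using f0[of y] by (simp add: ennreal_plus ennreal_mult)
  qed
  also have "\<dots> = 2 * (\<integral>\<^sup>+ y. ennreal (f y * (a - sqrt (s y))\<^sup>2) \<partial>M) + ennreal (2 * a\<^sup>2)"
    by (simp add: nn_integral_add nn_integral_cmult f1)
  finally show ?thesis .
qed

lemma integrable_mult_sqrt:
  fixes f s :: "'a \<Rightarrow> real"
  assumes [measurable]: "s \<in> borel_measurable M"
    and int_f: "integrable M f" and int_fs: "integrable M (\<lambda>y. f y * s y)"
    and f0: "\<And>y. 0 \<le> f y" and s0: "\<And>y. 0 \<le> s y"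
  shows "integrable M (\<lambda>y. f y * sqrt (s y))"
proof (rule Bochner_Integration.integrable_bound[OF Bochner_Integration.integrable_add[OF int_f int_fs]])
  show "AE y in M. norm (f y * sqrt (s y)) \<le> norm (f y + f y * s y)"
  proof (rule AE_I2)
    fix y
    have "sqrt (s y) \<le> 1 + s y"
      using s0[of y] sum_squares_ge_zero[of "sqrt (s y) - 1" 0]
      by (simp add: power2_eq_square algebra_simps)
    then show "norm (f y * sqrt (s y)) \<le> norm (f y + f y * s y)"
      using f0[of y] s0[of y] mult_left_mono[of "sqrt (s y)" "1 + s y" "f y"]
      by (simp add: distrib_left)
  qed
qed (use int_f in measurable)

lemma sq_diff_sqrt_integral_le_nn_integral:
  fixes f s :: "'a \<Rightarrow> real"
  assumes [measurable]: "f \<in> borel_measurable M" "s \<in> borel_measurable M"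
    and f0: "\<And>y. 0 \<le> f y" and s0: "\<And>y. 0 \<le> s y" and a0: "0 \<le> a"
    and f1: "(\<integral>\<^sup>+ y. ennreal (f y) \<partial>M) = 1"
  shows "ennreal ((a - sqrt (\<integral> y. f y * s y \<partial>M))\<^sup>2)
      \<le> (\<integral>\<^sup>+ y. ennreal (f y * (a - sqrt (s y))\<^sup>2) \<partial>M)"
proof (cases "(\<integral>\<^sup>+ y. ennreal (f y * (a - sqrt (s y))\<^sup>2) \<partial>M) = \<infinity>")
  case False
  then have "(\<integral>\<^sup>+ y. ennreal (f y * s y) \<partial>M) < \<infinity>"
    using nn_integral_mult_le_sq_diff_sqrt[OF assms(1-4) f1, of a]
    by (auto simp: less_top[symmetric] ennreal_mult_eq_top_iff top_unique)
  then have int_fs: "integrable M (\<lambda>y. f y * s y)"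
    using f0 s0 by (intro integrableI_nonneg) auto
  have int_f: "integrable M f" and f1': "(\<integral> y. f y \<partial>M) = 1"
    using f1 f0 by (auto intro!: integrableI_nonneg simp: integral_eq_nn_integral)
  have int_fg: "integrable M (\<lambda>y. f y * sqrt (s y))"
    using assms(2) int_f int_fs f0 s0 by (rule integrable_mult_sqrt)
  define m where "m = (\<integral> y. f y * sqrt (s y) \<partial>M)"
  define h where "h = (\<integral> y. f y * s y \<partial>M)"
  have expand: "integrable M (\<lambda>y. f y * (c - sqrt (s y))\<^sup>2)
      \<and> (\<integral> y. f y * (c - sqrt (s y))\<^sup>2 \<partial>M) = c\<^sup>2 - 2 * c * m + h" for c
  proof -
    have "(\<lambda>y. f y * (c - sqrt (s y))\<^sup>2) = (\<lambda>y. c\<^sup>2 * f y - 2 * c * (f y * sqrt (s y)) + f y * s y)"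
      using s0 by (auto simp: power2_eq_square algebra_simps)
    then show ?thesis
      unfolding m_def h_def using int_f int_fs int_fg f1'
      by simp
  qed
  have h0: "0 \<le> h"
    unfolding h_def using f0 s0 by simp
  have "0 \<le> m\<^sup>2 - 2 * m * m + h"
    using expand[of m] Bochner_Integration.integral_nonneg[of M "\<lambda>y. f y * (m - sqrt (s y))\<^sup>2"] f0 by simp
  then have m_le: "m \<le> sqrt h"
    by (intro real_le_rsqrt) (simp add: power2_eq_square)
  have "(a - sqrt h)\<^sup>2 \<le> a\<^sup>2 - 2 * a * m + h"
    using h0 mult_left_mono[OF m_le a0] by (simp add: power2_eq_square algebra_simps)
  also have "\<dots> = (\<integral> y. f y * (a - sqrt (s y))\<^sup>2 \<partial>M)"
    using expand by simp
  also have "ennreal \<dots> = (\<integral>\<^sup>+ y. ennreal (f y * (a - sqrt (s y))\<^sup>2) \<partial>M)"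
    using expand f0 by (intro nn_integral_eq_integral[symmetric]) auto
  finally show ?thesis
    unfolding h_def by (simp add: ennreal_leI)
qed simp

lemma L2_norm_sq_le_nn_integral:
  "ennreal ((L2_norm u)\<^sup>2) \<le> (\<integral>\<^sup>+ x. ennreal ((u x)\<^sup>2) \<partial>lborel)"
proof (cases "integrable lborel (\<lambda>x. (u x)\<^sup>2)")
  case True
  then show ?thesis
    unfolding L2_norm_def by (simp add: nn_integral_eq_integral)
next
  case False
  then show ?thesis
    unfolding L2_norm_def by (simp add: not_integrable_integral_eq)
qed

lemma L2_norm_sq_eq_nn_integral:
  assumes [measurable]: "u \<in> borel_measurable borel"
    and finite: "(\<integral>\<^sup>+ x. ennreal ((u x)\<^sup>2) \<partial>lborel) < \<infinity>"
  shows "ennreal ((L2_norm u)\<^sup>2) = (\<integral>\<^sup>+ x. ennreal ((u x)\<^sup>2) \<partial>lborel)"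
proof -
  have "integrable lborel (\<lambda>x. (u x)\<^sup>2)"
    using finite by (intro integrableI_nonneg) auto
  then show ?thesis
    unfolding L2_norm_def by (simp add: nn_integral_eq_integral)
qed

lemma prob_density_nn_integral_translate_sq_diff_sqrt_le:
  assumes "prob_density s"
  shows "(\<integral>\<^sup>+ x. ennreal ((sqrt (s (x + z)) - sqrt (s x))\<^sup>2) \<partial>lborel) \<le> 4"
proof -
  have [measurable]: "s \<in> borel_measurable borel" and s0: "\<And>x. 0 \<le> s x"
    and s1: "(\<integral>\<^sup>+ x. ennreal (s x) \<partial>lborel) = 1"
    using assms unfolding prob_density_def by auto
  have "(\<integral>\<^sup>+ x. ennreal ((sqrt (s (x + z)) - sqrt (s x))\<^sup>2) \<partial>lborel)
      \<le> (\<integral>\<^sup>+ x. 2 * ennreal (s (x + z)) + 2 * ennreal (s x) \<partial>lborel)"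
  proof (rule nn_integral_mono)
    fix x
    have "(sqrt (s (x + z)) - sqrt (s x))\<^sup>2 \<le> 2 * s (x + z) + 2 * s x"
      using s0[of x] s0[of "x + z"] sum_squares_ge_zero[of "sqrt (s (x + z))" "sqrt (s x)"]
      by (simp add: power2_eq_square algebra_simps)
    then have "ennreal ((sqrt (s (x + z)) - sqrt (s x))\<^sup>2) \<le> ennreal (2 * s (x + z) + 2 * s x)"
      by (rule ennreal_leI)
    then show "ennreal ((sqrt (s (x + z)) - sqrt (s x))\<^sup>2) \<le> 2 * ennreal (s (x + z)) + 2 * ennreal (s x)"
      using s0 by (simp add: ennreal_plus ennreal_mult)
  qed
  also have "\<dots> = 4"
    using nn_integral_lborel_translate[of "\<lambda>x. ennreal (s x)" z]
    by (simp add: nn_integral_add nn_integral_cmult s1)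
  finally show ?thesis .
qed

lemma prob_density_nn_integral_translate_sq_diff_sqrt_le_omega2:
  assumes s: "prob_density s" and omega: "omega2 (\<lambda>x. sqrt (s x)) \<bar>z\<bar> \<le> c"
  shows "(\<integral>\<^sup>+ x. ennreal ((sqrt (s (x + z)) - sqrt (s x))\<^sup>2) \<partial>lborel) \<le> ennreal (c\<^sup>2)"
proof -
  have [measurable]: "s \<in> borel_measurable borel"
    using s unfolding prob_density_def by auto
  define u where "u z x = sqrt (s (x + z)) - sqrt (s x)" for z x
  have u_eq: "ennreal ((L2_norm (u z))\<^sup>2) = (\<integral>\<^sup>+ x. ennreal ((u z x)\<^sup>2) \<partial>lborel)" for z
    unfolding u_def using prob_density_nn_integral_translate_sq_diff_sqrt_le[OF s, of z]
    by (intro L2_norm_sq_eq_nn_integral) (measurable, simp add: le_less_trans)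
  have "ennreal ((L2_norm (u z))\<^sup>2) \<le> ennreal 4" for z
    using u_eq[of z] prob_density_nn_integral_translate_sq_diff_sqrt_le[OF s, of z]
    by (simp add: u_def)
  then have "(L2_norm (u z))\<^sup>2 \<le> 2\<^sup>2" for z
    using ennreal_le_iff[of 4 "(L2_norm (u z))\<^sup>2"] by simp
  then have u_le_2: "L2_norm (u z) \<le> 2" for z
    by (rule power2_le_imp_le) simp
  have "L2_norm (u z) \<le> (SUP z' \<in> {z'. \<bar>z'\<bar> \<le> \<bar>z\<bar>}. L2_norm (u z'))"
    using u_le_2 by (intro cSUP_upper bdd_aboveI2) auto
  also have "\<dots> = omega2 (\<lambda>x. sqrt (s x)) \<bar>z\<bar>"
    by (simp add: omega2_def u_def[abs_def])
  also note omega
  finally have "(L2_norm (u z))\<^sup>2 \<le> c\<^sup>2"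
    by (intro power_mono) (simp_all add: L2_norm_def)
  then show ?thesis
    using u_eq[of z] unfolding u_def by (metis ennreal_leI)
qed

lemma sq_diff_sqrt_convolution_le:
  fixes k s :: "real \<Rightarrow> real"
  assumes [measurable]: "k \<in> borel_measurable borel" "s \<in> borel_measurable borel"
    and k0: "\<And>y. 0 \<le> k y" and s0: "\<And>y. 0 \<le> s y"
    and k1: "(\<integral>\<^sup>+ y. ennreal (k y) \<partial>lborel) = 1"
  shows "ennreal ((sqrt (s x) - sqrt (convolution k s x))\<^sup>2)
      \<le> (\<integral>\<^sup>+ z. ennreal (k z * (sqrt (s x) - sqrt (s (x - z)))\<^sup>2) \<partial>lborel)"
proof -
  have "(\<integral>\<^sup>+ y. ennreal (k (x - y)) \<partial>lborel) = 1"
    using nn_integral_lborel_reflect_translate[of "\<lambda>y. ennreal (k y)" x] k1 by simp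
  then have "ennreal ((sqrt (s x) - sqrt (convolution k s x))\<^sup>2)
      \<le> (\<integral>\<^sup>+ y. ennreal (k (x - y) * (sqrt (s x) - sqrt (s y))\<^sup>2) \<partial>lborel)"
    unfolding convolution_def by (intro sq_diff_sqrt_integral_le_nn_integral) (simp_all add: k0 s0)
  also have "\<dots> = (\<integral>\<^sup>+ z. ennreal (k z * (sqrt (s x) - sqrt (s (x - z)))\<^sup>2) \<partial>lborel)"
    using nn_integral_lborel_reflect_translate
      [of "\<lambda>z. ennreal (k z * (sqrt (s x) - sqrt (s (x - z)))\<^sup>2)" x]
    by simp
  finally show ?thesis .
qed

lemma nn_integral_sq_diff_sqrt_convolution_le:
  fixes k s :: "real \<Rightarrow> real"
  assumes [measurable]: "k \<in> borel_measurable borel" "s \<in> borel_measurable borel"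
    and k0: "\<And>y. 0 \<le> k y" and s0: "\<And>y. 0 \<le> s y"
    and k1: "(\<integral>\<^sup>+ y. ennreal (k y) \<partial>lborel) = 1"
  shows "(\<integral>\<^sup>+ x. ennreal ((sqrt (s x) - sqrt (convolution k s x))\<^sup>2) \<partial>lborel)
      \<le> (\<integral>\<^sup>+ z. ennreal (k z) * (\<integral>\<^sup>+ x. ennreal ((sqrt (s (x - z)) - sqrt (s x))\<^sup>2) \<partial>lborel) \<partial>lborel)"
proof -
  have "(\<integral>\<^sup>+ x. ennreal ((sqrt (s x) - sqrt (convolution k s x))\<^sup>2) \<partial>lborel)
      \<le> (\<integral>\<^sup>+ x. (\<integral>\<^sup>+ z. ennreal (k z * (sqrt (s x) - sqrt (s (x - z)))\<^sup>2) \<partial>lborel) \<partial>lborel)"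
    by (intro nn_integral_mono sq_diff_sqrt_convolution_le) (simp_all add: k0 s0 k1)
  also have "\<dots> = (\<integral>\<^sup>+ z. (\<integral>\<^sup>+ x. ennreal (k z * (sqrt (s x) - sqrt (s (x - z)))\<^sup>2) \<partial>lborel) \<partial>lborel)"
    by (rule lborel_pair.Fubini'[symmetric]) measurable
  also have "\<dots> = (\<integral>\<^sup>+ z. ennreal (k z) * (\<integral>\<^sup>+ x. ennreal ((sqrt (s (x - z)) - sqrt (s x))\<^sup>2) \<partial>lborel) \<partial>lborel)"
    using k0 by (simp add: nn_integral_cmult[symmetric] ennreal_mult power2_commute)
  finally show ?thesis .
qed

lemma concave_on_mono_on_scale_le:
  fixes \<phi> :: "real \<Rightarrow> real"
  assumes mono: "mono_on {0..} \<phi>" and concave: "concave_on {0..} \<phi>" and zero: "\<phi> 0 = 0"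
    and w: "0 \<le> w" and t: "0 \<le> t"
  shows "\<phi> (w * t) \<le> max 1 t * \<phi> w"
proof (cases "t \<le> 1")
  case True
  then have "\<phi> (w * t) \<le> \<phi> w"
    using mono_onD[OF mono, of "w * t" w] w t by (simp add: mult_left_le)
  then show ?thesis
    using True by simp
next
  case False
  text \<open>\<open>w\<close> is the convex combination \<open>(1 - 1/t) \<cdot> 0 + (1/t) \<cdot> w t\<close>.\<close>
  have "(1 - 1/t) * \<phi> 0 + (1/t) * \<phi> (w * t) \<le> \<phi> ((1 - 1/t) *\<^sub>R 0 + (1/t) *\<^sub>R (w * t))"
    using False w by (intro concave_onD[OF concave]) auto
  then have "\<phi> (w * t) / t \<le> \<phi> w"
    using False zero by simp
  then show ?thesis
    using False by (simp add: divide_le_eq mult.commute)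
qed

lemma concave_on_mono_on_sq_scale_abs_le:
  fixes \<phi> :: "real \<Rightarrow> real"
  assumes mono: "mono_on {0..} \<phi>" and concave: "concave_on {0..} \<phi>" and zero: "\<phi> 0 = 0"
    and w: "0 \<le> w"
  shows "(\<phi> (w * \<bar>x\<bar>))\<^sup>2 \<le> max 1 (x\<^sup>2) * (\<phi> w)\<^sup>2"
proof -
  have "0 \<le> \<phi> (w * \<bar>x\<bar>)"
    using mono_onD[OF mono, of 0 "w * \<bar>x\<bar>"] w zero by simp
  then have "(\<phi> (w * \<bar>x\<bar>))\<^sup>2 \<le> (max 1 \<bar>x\<bar>)\<^sup>2 * (\<phi> w)\<^sup>2"
    using concave_on_mono_on_scale_le[OF mono concave zero w, of "\<bar>x\<bar>"]
    by (simp add: power_mono power_mult_distrib[symmetric])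
  moreover have "(max 1 \<bar>x\<bar>)\<^sup>2 = max 1 (x\<^sup>2)"
    using abs_square_le_1[of x] by (auto simp: max_def abs_square_eq_1)
  ultimately show ?thesis
    by simp
qed

lemma borel_measurable_mono_on_abs:
  fixes \<phi> :: "real \<Rightarrow> real"
  assumes "mono_on {0..} \<phi>"
  shows "(\<lambda>x. \<phi> \<bar>x\<bar>) \<in> borel_measurable borel"
proof -
  have "mono (\<lambda>x. \<phi> (max 0 x))"
    using assms by (intro monoI mono_onD[OF assms]) auto
  then have [measurable]: "(\<lambda>x. \<phi> (max 0 x)) \<in> borel_measurable borel"
    by (rule borel_measurable_mono)
  have "(\<lambda>x. \<phi> (max 0 \<bar>x\<bar>)) \<in> borel_measurable borel"
    by measurable
  then show ?thesis
    by simp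
qed

theorem lemma2:
  fixes s K \<phi> :: "real \<Rightarrow> real"
  assumes s_dens: "prob_density s"
    and K_dens: "prob_density K"
    and phi_mono: "mono_on {0..} \<phi>"
    and phi_concave: "concave_on {0..} \<phi>"
    and phi_zero: "\<phi> 0 = 0"
    and modulus: "\<And>\<eta>. \<eta> \<ge> 0 \<Longrightarrow> omega2 (\<lambda>x. sqrt (s x)) \<eta> \<le> \<phi> \<eta>"
    and w_pos: "w > 0"
  shows "ennreal ((L2_norm (\<lambda>x. sqrt (s x) - sqrt (convolution (scaled_kernel K w) s x)))\<^sup>2)
    \<le> 2 * (\<integral>\<^sup>+ x. ennreal (max 1 (x\<^sup>2) * K x) \<partial>lborel) * ennreal ((\<phi> w)\<^sup>2)"
proof -
  have [measurable]: "s \<in> borel_measurable borel" "K \<in> borel_measurable borel"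
    and s0: "\<And>x. 0 \<le> s x" and K0: "\<And>x. 0 \<le> K x" and K1: "(\<integral>\<^sup>+ x. ennreal (K x) \<partial>lborel) = 1"
    using s_dens K_dens unfolding prob_density_def by auto
  define Kw where "Kw = scaled_kernel K w"
  have [measurable]: "Kw \<in> borel_measurable borel" and Kw0: "\<And>z. 0 \<le> Kw z"
    using K0 w_pos unfolding Kw_def scaled_kernel_def by auto
  have Kw1: "(\<integral>\<^sup>+ z. ennreal (Kw z) \<partial>lborel) = 1"
    using nn_integral_scaled_kernel_mult[of K "\<lambda>_. 1" w] w_pos K1 by (simp add: Kw_def)
  have [measurable]: "(\<lambda>z. \<phi> \<bar>z\<bar>) \<in> borel_measurable borel"
    by (rule borel_measurable_mono_on_abs[OF phi_mono])
  have "ennreal ((L2_norm (\<lambda>x. sqrt (s x) - sqrt (convolution Kw s x)))\<^sup>2)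
      \<le> (\<integral>\<^sup>+ z. ennreal (Kw z) * (\<integral>\<^sup>+ x. ennreal ((sqrt (s (x - z)) - sqrt (s x))\<^sup>2) \<partial>lborel) \<partial>lborel)"
    using L2_norm_sq_le_nn_integral nn_integral_sq_diff_sqrt_convolution_le[OF _ _ Kw0 s0 Kw1]
    by (rule order_trans) measurable
  also have "\<dots> \<le> (\<integral>\<^sup>+ z. ennreal (Kw z) * ennreal ((\<phi> \<bar>z\<bar>)\<^sup>2) \<partial>lborel)"
    using prob_density_nn_integral_translate_sq_diff_sqrt_le_omega2[OF s_dens modulus, of "- _"]
    by (intro nn_integral_mono mult_left_mono) simp_all
  also have "\<dots> = (\<integral>\<^sup>+ x. ennreal (K x) * ennreal ((\<phi> (w * \<bar>x\<bar>))\<^sup>2) \<partial>lborel)"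
    using nn_integral_scaled_kernel_mult[of K "\<lambda>z. ennreal ((\<phi> \<bar>z\<bar>)\<^sup>2)" w] w_pos
    by (simp add: Kw_def abs_mult)
  also have "\<dots> \<le> (\<integral>\<^sup>+ x. ennreal (max 1 (x\<^sup>2) * K x) * ennreal ((\<phi> w)\<^sup>2) \<partial>lborel)"
    using concave_on_mono_on_sq_scale_abs_le[OF phi_mono phi_concave phi_zero] w_pos K0
    by (intro nn_integral_mono)
      (simp add: ennreal_mult''[symmetric] ennreal_leI mult_left_mono mult.assoc mult.left_commute)
  also have "\<dots> = (\<integral>\<^sup>+ x. ennreal (max 1 (x\<^sup>2) * K x) \<partial>lborel) * ennreal ((\<phi> w)\<^sup>2)"
    by (rule nn_integral_multc) measurable
  also have "\<dots> \<le> 2 * (\<integral>\<^sup>+ x. ennreal (max 1 (x\<^sup>2) * K x) \<partial>lborel) * ennreal ((\<phi> w)\<^sup>2)"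
    by (rule mult_right_mono) (simp_all add: mult_2 add_increasing2)
  finally show ?thesis
    unfolding Kw_def .
qed

end
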